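(* Let $K,L\subset\mathbb{R}^n$ be nonempty compact convex sets. There exist $p\in K$ and $q\in L$ such that $|q-p|=d_{\mathcal H}(K,L)$ and either $(p,q]\subset (K\,\widetilde{\cup}\,L)\setminus K$ or $[p,q)\subset (K\,\widetilde{\cup}\,L)\setminus L$. Moreover, in the first case there exists a hyperplane orthogonal to $[p,q]$ passing through $p$ which supports $K$, and in the second case there exists a hyperplane orthogonal to $[p,q]$ passing through $q$ which supports $L$.
   Context: $K\,\widetilde{\cup}\,L$ denotes the closed convex hull of $K\cup L$. For points $p,q$, $[p,q]$ is the closed segment between them, $[p,q)=[p,q]\setminus\{q\}$ and $(p,q]=[p,q]\setminus\{p\}$. $d_{\mathcal H}$ is the Hausdorff distance: $d_{\mathcal H}(K,L)=\max\{\sup_{x\in K}d(x,L),\sup_{y\in L}d(y,K)\}$, with $d(x,L)=\min\{|x-y|:y\in L\}$. A hyperplane supports a convex set if it meets the set and the set lies in one of its closed half-spaces. *)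

theory Defs
  imports "HOL-Analysis.Analysis"
begin

definition hausdorff_dist :: "'a::metric_space set \<Rightarrow> 'a set \<Rightarrow> real" where
  "hausdorff_dist K L = max (SUP x\<in>K. infdist x L) (SUP y\<in>L. infdist y K)"

definition is_hyperplane :: "'a::euclidean_space set \<Rightarrow> bool" where
  "is_hyperplane H \<longleftrightarrow> (\<exists>a b. a \<noteq> 0 \<and> H = {x. a \<bullet> x = b})"

definition supports :: "'a::euclidean_space set \<Rightarrow> 'a set \<Rightarrow> bool" where
  "supports H S \<longleftrightarrow> H \<inter> S \<noteq> {} \<and>
     (\<exists>a b. a \<noteq> 0 \<and> H = {x. a \<bullet> x = b} \<and>
        (S \<subseteq> {x. a \<bullet> x \<le> b} \<or> S \<subseteq> {x. a \<bullet> x \<ge> b}))"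

definition orth_to_segment :: "'a::euclidean_space set \<Rightarrow> 'a \<Rightarrow> 'a \<Rightarrow> bool" where
  "orth_to_segment H p q \<longleftrightarrow> (\<forall>u\<in>H. \<forall>v\<in>H. (u - v) \<bullet> (q - p) = 0)"

end

theory Submission
  imports Defs
begin

text \<open>By symmetry we may assume that the Hausdorff distance is the largest distance
  \<open>d(p, L)\<close> of a point \<open>p \<in> K\<close> from \<open>L\<close>; let \<open>q\<close> be the point of \<open>L\<close> nearest to \<open>p\<close>.
  Minimality of \<open>q\<close> keeps \<open>[p, q)\<close> outside \<open>L\<close> and puts \<open>L\<close> into the half-space
  \<open>(p - q) \<bullet> (x - q) \<le> 0\<close>, so the hyperplane through \<open>q\<close> orthogonal to \<open>[p, q]\<close>
  supports \<open>L\<close>. For \<open>k \<in> K\<close> with nearest point \<open>y \<in> L\<close>, Cauchy-Schwarz and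
  \<open>d(k, L) \<le> |p - q|\<close> give \<open>(p - q) \<bullet> (k - y) \<le> |p - q|\<^sup>2\<close>; adding
  \<open>(p - q) \<bullet> (y - q) \<le> 0\<close> yields \<open>(p - q) \<bullet> (k - p) \<le> 0\<close>, so the hyperplane through
  \<open>p\<close> orthogonal to \<open>[p, q]\<close> supports \<open>K\<close>. If \<open>p = q\<close> then \<open>K = L\<close>, and any
  supporting hyperplane of \<open>K\<close> will do.\<close>

definition hausdorff_segment :: "'a::euclidean_space set \<Rightarrow> 'a set \<Rightarrow> 'a \<Rightarrow> 'a \<Rightarrow> bool" where
  "hausdorff_segment K L p q \<longleftrightarrow> p \<in> K \<and> q \<in> L \<and> dist p q = hausdorff_dist K L \<and>
     (closed_segment p q - {p} \<subseteq> closure (convex hull (K \<union> L)) - K \<or>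
      closed_segment p q - {q} \<subseteq> closure (convex hull (K \<union> L)) - L) \<and>
     (closed_segment p q - {p} \<subseteq> closure (convex hull (K \<union> L)) - K \<longrightarrow>
        (\<exists>H. is_hyperplane H \<and> orth_to_segment H p q \<and> p \<in> H \<and> supports H K)) \<and>
     (closed_segment p q - {q} \<subseteq> closure (convex hull (K \<union> L)) - L \<longrightarrow>
        (\<exists>H. is_hyperplane H \<and> orth_to_segment H p q \<and> q \<in> H \<and> supports H L))"

lemma hausdorff_dist_commute: "hausdorff_dist K L = hausdorff_dist L K"
  unfolding hausdorff_dist_def by (simp add: max.commute)

lemma orth_to_segment_commute: "orth_to_segment H p q \<longleftrightarrow> orth_to_segment H q p"
  unfolding orth_to_segment_def by (metis inner_minus_right minus_diff_eq neg_equal_0_iff_equal)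

lemma hausdorff_segment_commute:
  "hausdorff_segment K L p q \<Longrightarrow> hausdorff_segment L K q p"
  unfolding hausdorff_segment_def
  by (auto simp: hausdorff_dist_commute[of K L] orth_to_segment_commute[of _ p q]
      dist_commute closed_segment_commute[of p q] Un_commute)

lemma is_hyperplane_level_set: "a \<noteq> 0 \<Longrightarrow> is_hyperplane {x. a \<bullet> x = b}"
  unfolding is_hyperplane_def by blast

lemma orth_to_segment_level_set: "orth_to_segment {x. (p - q) \<bullet> x = b} p q"
  unfolding orth_to_segment_def by (simp add: inner_commute algebra_simps)

lemma supports_level_set_at_max:
  assumes "a \<noteq> 0" "p \<in> S" "\<And>x. x \<in> S \<Longrightarrow> a \<bullet> x \<le> a \<bullet> p"
  shows "supports {x. a \<bullet> x = a \<bullet> p} S"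
  unfolding supports_def using assms by blast

lemma exists_supporting_hyperplane:
  fixes K :: "'a::euclidean_space set"
  assumes "compact K" "K \<noteq> {}"
  obtains p H where "p \<in> K" "is_hyperplane H" "p \<in> H" "supports H K"
proof -
  obtain a :: 'a where "a \<in> Basis" using nonempty_Basis by blast
  then have "a \<noteq> 0" by auto
  have "continuous_on K (\<lambda>x. a \<bullet> x)" by (intro continuous_intros)
  then obtain p where "p \<in> K" "\<forall>x\<in>K. a \<bullet> x \<le> a \<bullet> p"
    using continuous_attains_sup[OF assms] by blast
  with \<open>a \<noteq> 0\<close> show ?thesis
    using that is_hyperplane_level_set supports_level_set_at_max by blast
qed

lemma hausdorff_dist_eq_infdist:
  assumes "p \<in> K" "L \<noteq> {}"
    and "\<And>x. x \<in> K \<Longrightarrow> infdist x L \<le> infdist p L"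
    and "\<And>y. y \<in> L \<Longrightarrow> infdist y K \<le> infdist p L"
  shows "hausdorff_dist K L = infdist p L"
proof -
  have "(SUP x\<in>K. infdist x L) = infdist p L"
    by (rule cSup_eq_maximum) (use assms in auto)
  moreover have "(SUP y\<in>L. infdist y K) \<le> infdist p L"
    by (rule cSUP_least) (use assms in auto)
  ultimately show ?thesis unfolding hausdorff_dist_def by simp
qed

lemma hausdorff_dist_self: "K \<noteq> {} \<Longrightarrow> hausdorff_dist K K = 0"
  unfolding hausdorff_dist_def by (simp add: infdist_zero)

lemma subset_if_infdist_le_0:
  assumes "closed L" "L \<noteq> {}" "\<And>x. x \<in> K \<Longrightarrow> infdist x L \<le> 0"
  shows "K \<subseteq> L"
  using assms in_closed_iff_infdist_zero infdist_nonneg by (metis antisym subsetI)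

lemma closed_segment_closer_than_endpoint:
  fixes p q x :: "'a::euclidean_space"
  assumes "x \<in> closed_segment p q - {q}"
  shows "dist p x < dist p q"
proof (cases "x = p")
  case True
  with assms show ?thesis by auto
next
  case False
  with assms have "x \<in> open_segment p q" by (auto simp: open_segment_def)
  then show ?thesis using dist_in_open_segment by (metis dist_commute)
qed

lemma closest_point_segment_disjoint:
  fixes p q :: "'a::euclidean_space"
  assumes "\<And>y. y \<in> L \<Longrightarrow> dist p q \<le> dist p y"
  shows "(closed_segment p q - {q}) \<inter> L = {}"
  using assms closed_segment_closer_than_endpoint by fastforce

lemma inner_le_if_infdist_le:
  fixes p q k :: "'a::euclidean_space"
  assumes L: "convex L" "closed L" "q \<in> L"
    and closest: "\<And>y. y \<in> L \<Longrightarrow> dist p q \<le> dist p y"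
    and farthest: "infdist k L \<le> dist p q"
  shows "(p - q) \<bullet> k \<le> (p - q) \<bullet> p"
proof -
  obtain y where y: "y \<in> L" "infdist k L = dist k y"
    using infdist_attains_inf[OF L(2)] L(3) by blast
  have "(p - q) \<bullet> (k - y) \<le> norm (p - q) * norm (k - y)"
    by (rule norm_cauchy_schwarz)
  also have "\<dots> \<le> norm (p - q) * norm (p - q)"
    using farthest y(2) by (simp add: dist_norm mult_left_mono)
  also have "\<dots> = (p - q) \<bullet> (p - q)"
    by (simp add: dot_square_norm power2_eq_square)
  finally have "(p - q) \<bullet> (k - y) \<le> (p - q) \<bullet> (p - q)" .
  moreover have "(p - q) \<bullet> (y - q) \<le> 0"
    using any_closest_point_dot[OF L y(1)] closest by blast
  ultimately show ?thesis by (simp add: inner_diff_right)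
qed

lemma hausdorff_segment_self:
  fixes K :: "'a::euclidean_space set"
  assumes "compact K" "K \<noteq> {}"
  obtains p where "hausdorff_segment K K p p"
proof -
  obtain p H where "p \<in> K" "is_hyperplane H" "p \<in> H" "supports H K"
    using exists_supporting_hyperplane[OF assms] .
  moreover have "orth_to_segment H p p" unfolding orth_to_segment_def by simp
  ultimately show ?thesis
    using that hausdorff_dist_self[OF assms(2)] unfolding hausdorff_segment_def by auto
qed

lemma hausdorff_segment_closest_point:
  fixes K L :: "'a::euclidean_space set"
  assumes L: "convex L" "closed L"
    and "p \<in> K" "q \<in> L" "p \<noteq> q"
    and closest: "\<And>y. y \<in> L \<Longrightarrow> dist p q \<le> dist p y"
    and farthest: "\<And>k. k \<in> K \<Longrightarrow> infdist k L \<le> dist p q"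
    and hd: "hausdorff_dist K L = dist p q"
  shows "hausdorff_segment K L p q"
proof -
  have "closed_segment p q \<subseteq> closure (convex hull (K \<union> L))"
    using \<open>p \<in> K\<close> \<open>q \<in> L\<close> closure_subset
    by (metis Un_iff closed_segment_subset convex_convex_hull hull_inc subset_trans)
  then have seg: "closed_segment p q - {q} \<subseteq> closure (convex hull (K \<union> L)) - L"
    using closest_point_segment_disjoint[OF closest] by blast
  have "p - q \<noteq> 0" using \<open>p \<noteq> q\<close> by simp
  let ?H\<^sub>K = "{x. (p - q) \<bullet> x = (p - q) \<bullet> p}" and ?H\<^sub>L = "{x. (p - q) \<bullet> x = (p - q) \<bullet> q}"
  have "supports ?H\<^sub>K K"
    using supports_level_set_at_max[OF \<open>p - q \<noteq> 0\<close> \<open>p \<in> K\<close>]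
      inner_le_if_infdist_le[OF L \<open>q \<in> L\<close> closest farthest] by blast
  then have "\<exists>H. is_hyperplane H \<and> orth_to_segment H p q \<and> p \<in> H \<and> supports H K"
    using is_hyperplane_level_set[OF \<open>p - q \<noteq> 0\<close>] orth_to_segment_level_set by blast
  moreover have "supports ?H\<^sub>L L"
  proof (rule supports_level_set_at_max[OF \<open>p - q \<noteq> 0\<close> \<open>q \<in> L\<close>])
    fix y assume "y \<in> L"
    then have "(p - q) \<bullet> (y - q) \<le> 0"
      using any_closest_point_dot[OF L \<open>q \<in> L\<close>] closest by blast
    then show "(p - q) \<bullet> y \<le> (p - q) \<bullet> q"
      by (simp add: inner_diff_right)
  qed
  then have "\<exists>H. is_hyperplane H \<and> orth_to_segment H p q \<and> q \<in> H \<and> supports H L"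
    using is_hyperplane_level_set[OF \<open>p - q \<noteq> 0\<close>] orth_to_segment_level_set by blast
  ultimately show ?thesis
    unfolding hausdorff_segment_def using seg hd \<open>p \<in> K\<close> \<open>q \<in> L\<close> by simp
qed

lemma hausdorff_segment_from_farthest_point:
  fixes K L :: "'a::euclidean_space set"
  assumes "compact K" "K \<noteq> {}" and "compact L" "convex L" "L \<noteq> {}"
    and "p \<in> K"
    and farthest: "\<And>x. x \<in> K \<Longrightarrow> infdist x L \<le> infdist p L"
    and "\<And>y. y \<in> L \<Longrightarrow> infdist y K \<le> infdist p L"
  obtains p' q' where "hausdorff_segment K L p' q'"
proof -
  have "closed K" "closed L" using assms compact_imp_closed by auto
  obtain q where "q \<in> L" and pq: "infdist p L = dist p q"
    using infdist_attains_inf[OF \<open>closed L\<close> \<open>L \<noteq> {}\<close>] by blast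
  have hd: "hausdorff_dist K L = dist p q"
    using hausdorff_dist_eq_infdist assms pq by metis
  show ?thesis
  proof (cases "p = q")
    case True
    then have "K \<subseteq> L" "L \<subseteq> K"
      using subset_if_infdist_le_0 assms \<open>closed K\<close> \<open>closed L\<close> pq by (metis dist_self)+
    then show ?thesis
      using hausdorff_segment_self[OF \<open>compact K\<close> \<open>K \<noteq> {}\<close>] that by auto
  next
    case False
    have "dist p q \<le> dist p y" if "y \<in> L" for y
      using infdist_le[OF that, of p] pq by simp
    then show ?thesis
      using hausdorff_segment_closest_point[OF \<open>convex L\<close> \<open>closed L\<close> \<open>p \<in> K\<close> \<open>q \<in> L\<close> False]
        farthest pq hd that by metis
  qed
qed

theorem lemma3p3:
  fixes K L :: "'a::euclidean_space set"
  assumes "compact K" "convex K" "K \<noteq> {}"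
    and "compact L" "convex L" "L \<noteq> {}"
  shows "\<exists>p\<in>K. \<exists>q\<in>L. dist p q = hausdorff_dist K L \<and>
     (closed_segment p q - {p} \<subseteq> closure (convex hull (K \<union> L)) - K \<or>
      closed_segment p q - {q} \<subseteq> closure (convex hull (K \<union> L)) - L) \<and>
     (closed_segment p q - {p} \<subseteq> closure (convex hull (K \<union> L)) - K \<longrightarrow>
        (\<exists>H. is_hyperplane H \<and> orth_to_segment H p q \<and> p \<in> H \<and> supports H K)) \<and>
     (closed_segment p q - {q} \<subseteq> closure (convex hull (K \<union> L)) - L \<longrightarrow>
        (\<exists>H. is_hyperplane H \<and> orth_to_segment H p q \<and> q \<in> H \<and> supports H L))"
proof -
  have "continuous_on K (\<lambda>x. infdist x L)" "continuous_on L (\<lambda>y. infdist y K)"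
    by (intro continuous_intros)+
  then obtain p q
    where p: "p \<in> K" "\<forall>x\<in>K. infdist x L \<le> infdist p L"
      and q: "q \<in> L" "\<forall>y\<in>L. infdist y K \<le> infdist q K"
    using continuous_attains_sup[OF \<open>compact K\<close> \<open>K \<noteq> {}\<close>]
      continuous_attains_sup[OF \<open>compact L\<close> \<open>L \<noteq> {}\<close>] by (metis (no_types, lifting))
  have "\<exists>p' q'. hausdorff_segment K L p' q'"
  proof (cases "infdist q K \<le> infdist p L")
    case True
    then have "infdist y K \<le> infdist p L" if "y \<in> L" for y
      using q(2) that by force
    then show ?thesis
      using hausdorff_segment_from_farthest_point[OF assms(1,3-6) p(1)] p(2) by metis
  next
    case False
    then have "infdist x L \<le> infdist q K" if "x \<in> K" for x
      using p(2) that by force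
    then show ?thesis
      using hausdorff_segment_from_farthest_point[OF assms(4,6,1-3) q(1)] q(2)
        hausdorff_segment_commute by metis
  qed
  then show ?thesis unfolding hausdorff_segment_def by blast
qed

end
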